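(* Consider a D2D caching network with $K$ users each of cache size $M$ files, of which $S$ are selfish, and a library of $N$ files, encoded with an MDS code of rate $r\in(0,1)$ that is a real positive root of $\sum_{i=0}^{K-S-1}\binom{K-S}{i}(-\frac{M}{N})^{K-S-i}r^{K-S-1-i}+1$ (with $\frac{M(K-S)}{N}>1$), using the random caching scheme and delivery procedure described in the context. Then the following rate is achievable: $$R(M)=\frac{1}{r}\sum_{i=2}^{K}\mathsf{R}(i)\Big(\frac{Mr}{N}\Big)^{i-1}\Big(1-\frac{Mr}{N}\Big)^{K-i+1},$$ where $$\mathsf{R}(i)=\sum_{j=0}^{i-2}\binom{S}{j}\binom{K-S}{i-j}\frac{i-j}{i-j-1}+(K-S)\binom{S}{i-1}.$$
   Context: Network: $K$ users in mutual range, no server; $S$ selfish users cache content but never transmit; all users receive all transmissions; each user $u$ requests an arbitrary file $\omega_u$ (arbitrary request vector). Rate = total number of transmitted bits divided by the file size $B$. Caching: each file of $B$ bits is split into $I$ subfiles (symbols of $\mathbb{F}_{2^{B/I}}$) and encoded with an $(I,I/r)$ MDS code (any $I$ of the $I/r$ encoded symbols recover the file); each user independently, for each file, caches a uniformly random set of $MI/N$ of the $I/r$ encoded symbols. For a file $\omega$ and a set $\mathcal{P}$ of users, $\Gamma_{\omega,\mathcal{P}}$ denotes the block of encoded symbols of $\omega$ cached by exactly the users in $\mathcal{P}$; its length is taken to be its typical value $(\frac{Mr}{N})^{|\mathcal{P}|}(1-\frac{Mr}{N})^{K-|\mathcal{P}|}\frac{I}{r}$ symbols (law of large numbers, large $I$).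 XOR of blocks of unequal length is done after zero-padding the shorter ones. A $\frac1f$-segment of a block is one of $f$ disjoint equal-length parts; segments sent by different users are disjoint if they have different offsets. Delivery: for every subset $\mathsf{U}\subseteq\mathcal{U}$ with $|\mathsf{U}|\in\{K,K-1,\dots,2\}$ containing at least one non-selfish user, let $\mathcal{T}$ be its set of non-selfish users, $\mathsf{t}=|\mathcal{T}|$. If $\mathsf{t}=1$, the unique $u\in\mathcal{T}$ transmits $\bigoplus_{v\in\mathsf{U},v\ne u}\Gamma_{\omega_v,\mathsf{U}\setminus\{v\}}$. If $\mathsf{t}\ge2$, pick any $u^*\in\mathcal{T}$; $u^*$ transmits a disjoint $\frac{1}{\mathsf{t}-1}$-segment of $\bigoplus_{u\in\mathcal{T},u\ne u^*}\Gamma_{\omega_u,\mathsf{U}\setminus\{u\}}$, and each $u\in\mathcal{T}\setminus\{u^*\}$ transmits a disjoint $\frac{1}{\mathsf{t}-1}$-segment of $\bigoplus_{v\in\mathsf{U},v\ne u}\Gamma_{\omega_v,\mathsf{U}\setminus\{v\}}$. Achievability means that with this scheme every user recovers its requested file for every request vector, with total rate $R(M)$. *)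

theory Defs
  imports Main Complex_Main
begin

text \<open>
D2D coded caching with selfish users, in the typical-length (law of large
numbers) idealisation fixed in the paper.
A block is identified by a file and the exact set P of users caching it.
A piece (f, P, n, o) is the o-th of n disjoint equal-length segments of the
block Gamma_{f,P} (n = 1, o = 0 is the whole block).  A transmission is the
XOR (after zero padding) of a finite set of pieces.
\<close>

type_synonym piece = "nat \<times> nat set \<times> nat \<times> nat"

text \<open>Typical length (in encoded symbols) of block Gamma_{f,P}; q = M r / N.\<close>
definition blen :: "nat \<Rightarrow> real \<Rightarrow> real \<Rightarrow> nat \<Rightarrow> nat set \<Rightarrow> real" where
  "blen K q r I P = q ^ card P * (1 - q) ^ (K - card P) * real I / r"

definition plen :: "nat \<Rightarrow> real \<Rightarrow> real \<Rightarrow> nat \<Rightarrow> piece \<Rightarrow> real" where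
  "plen K q r I p = (case p of (f, P, n, k) \<Rightarrow> blen K q r I P / real n)"

text \<open>Length of a transmission (XOR with zero padding of its pieces).\<close>
definition mlen :: "nat \<Rightarrow> real \<Rightarrow> real \<Rightarrow> nat \<Rightarrow> piece set \<Rightarrow> real" where
  "mlen K q r I m = Max (plen K q r I ` m)"

definition tx_index :: "nat \<Rightarrow> nat set \<Rightarrow> (nat set \<times> nat) set" where
  "tx_index K Sf = {(U, u). U \<subseteq> {..<K} \<and> 2 \<le> card U \<and> u \<in> U - Sf}"

text \<open>The transmission of user u for the subset U. ustar chooses u* from T;
off U u is the offset of the segment sent by u \<in> T - {u*};
cof U w is the offset of the segment of the component of user w in the XOR sent by u*.\<close>
definition msg :: "nat set \<Rightarrow> (nat \<Rightarrow> nat) \<Rightarrow> (nat set \<Rightarrow> nat) \<Rightarrow>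
    (nat set \<Rightarrow> nat \<Rightarrow> nat) \<Rightarrow> (nat set \<Rightarrow> nat \<Rightarrow> nat) \<Rightarrow> nat set \<Rightarrow> nat \<Rightarrow> piece set" where
  "msg Sf \<omega> ustar off cof U u =
    (let T = U - Sf; t = card T in
     if t = 1 then {(\<omega> v, U - {v}, 1, 0) | v. v \<in> U \<and> v \<noteq> u}
     else if u = ustar T then {(\<omega> w, U - {w}, t - 1, cof U w) | w. w \<in> T \<and> w \<noteq> u}
     else {(\<omega> v, U - {v}, t - 1, off U u) | v. v \<in> U \<and> v \<noteq> u})"

definition valid_offsets :: "nat \<Rightarrow> nat set \<Rightarrow> (nat set \<Rightarrow> nat) \<Rightarrow>
    (nat set \<Rightarrow> nat \<Rightarrow> nat) \<Rightarrow> (nat set \<Rightarrow> nat \<Rightarrow> nat) \<Rightarrow> bool" where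
  "valid_offsets K Sf ustar off cof \<longleftrightarrow>
    (\<forall>U. U \<subseteq> {..<K} \<and> 2 \<le> card U \<and> 2 \<le> card (U - Sf) \<longrightarrow>
       inj_on (off U) (U - Sf - {ustar (U - Sf)}) \<and>
       (\<forall>u \<in> U - Sf - {ustar (U - Sf)}. off U u < card (U - Sf) - 1 \<and> cof U u < card (U - Sf) - 1))"

inductive knows :: "piece set set \<Rightarrow> nat \<Rightarrow> piece \<Rightarrow> bool" for Msgs u where
  cached: "u \<in> P \<Longrightarrow> k < n \<Longrightarrow> knows Msgs u (f, P, n, k)"
| decode: "m \<in> Msgs \<Longrightarrow> p \<in> m \<Longrightarrow> (\<forall>p' \<in> m - {p}. knows Msgs u p') \<Longrightarrow> knows Msgs u p"

definition recovered :: "piece set set \<Rightarrow> nat \<Rightarrow> nat \<Rightarrow> nat set \<Rightarrow> bool" where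
  "recovered Msgs u f P \<longleftrightarrow> (\<exists>n > 0. \<forall>k < n. knows Msgs u (f, P, n, k))"

text \<open>MDS decoding: file f is recovered iff at least I encoded symbols of f are known.\<close>
definition decodes :: "nat \<Rightarrow> real \<Rightarrow> real \<Rightarrow> nat \<Rightarrow> piece set set \<Rightarrow> nat \<Rightarrow> nat \<Rightarrow> bool" where
  "decodes K q r I Msgs u f \<longleftrightarrow>
     real I \<le> (\<Sum>P \<in> {P. P \<subseteq> {..<K} \<and> recovered Msgs u f P}. blen K q r I P)"

text \<open>Rate of the scheme: total transmitted symbols divided by I (file = I symbols).\<close>
definition scheme_rate :: "nat \<Rightarrow> real \<Rightarrow> real \<Rightarrow> nat \<Rightarrow> nat set \<Rightarrow> (nat \<Rightarrow> nat) \<Rightarrow>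
    (nat set \<Rightarrow> nat) \<Rightarrow> (nat set \<Rightarrow> nat \<Rightarrow> nat) \<Rightarrow> (nat set \<Rightarrow> nat \<Rightarrow> nat) \<Rightarrow> real" where
  "scheme_rate K q r I Sf \<omega> ustar off cof =
     (\<Sum>(U, u) \<in> tx_index K Sf. mlen K q r I (msg Sf \<omega> ustar off cof U u)) / real I"

definition Rsf :: "nat \<Rightarrow> nat \<Rightarrow> nat \<Rightarrow> real" where
  "Rsf K S i = (\<Sum>j = 0..i-2. real (S choose j) * real ((K - S) choose (i - j))
                   * real (i - j) / real (i - j - 1))
               + real (K - S) * real (S choose (i - 1))"

definition Rach :: "nat \<Rightarrow> nat \<Rightarrow> real \<Rightarrow> nat \<Rightarrow> real \<Rightarrow> real" where
  "Rach K S M N r = (1 / r) * (\<Sum>i = 2..K. Rsf K S i * (M * r / real N) ^ (i - 1)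
                                  * (1 - M * r / real N) ^ (K - i + 1))"

end

theory Submission
  imports Defs
begin

text \<open>
Write q = M r / N.  A user w recovers every block of its file that is cached by a set P of
users containing a non-selfish one: if w \<notin> P, let U = P \<union> {w} and t = |U - Sf|.  Each of
the t - 1 segments of the block is sent XORed only with segments that w caches, by the
non-selfish user whose offset it is or, for the offset of w itself, by u*; for t = 1 the unique
non-selfish user sends the whole block.  These blocks make up the fraction 1 - (1 - q)^(K-S) of
the I/r encoded symbols, which is exactly I when r is the given root, so MDS decoding succeeds.
For the rate, every message of U consists of segments of blocks of typical length
q^(|U|-1) (1 - q)^(K-|U|+1) I/r, and the t senders of U together send t/(t - 1) such blocks
(one block if t = 1); counting the subsets U by |U \<inter> Sf| gives R(i).
\<close>

subsection \<open>Binomial identities\<close>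

lemma sum_Pow_binomial:
  fixes a b :: "'a::comm_semiring_1"
  assumes "finite A"
  shows "(\<Sum>P\<in>Pow A. a ^ card P * b ^ (card A - card P)) = (a + b) ^ card A"
proof -
  have "(a + b) ^ card A = (\<Prod>x\<in>A. a + b)" by simp
  also have "\<dots> = (\<Sum>X\<in>Pow A. (\<Prod>x\<in>X. a) * (\<Prod>x\<in>A - X. b))"
    by (rule prod_add[OF assms])
  also have "\<dots> = (\<Sum>P\<in>Pow A. a ^ card P * b ^ (card A - card P))"
    using assms by (intro sum.cong) (auto simp: card_Diff_subset finite_subset)
  finally show ?thesis by simp
qed

lemma one_minus_mult_power_expand:
  fixes a r :: "'a::comm_ring_1"
  assumes "0 < m"
  shows "(1 - a * r) ^ m
           = r * (\<Sum>i<m. of_nat (m choose i) * (- a) ^ (m - i) * r ^ (m - 1 - i)) + 1"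
proof -
  have "(1 - a * r) ^ m = (\<Sum>i\<le>m. of_nat (m choose i) * (- a * r) ^ (m - i))"
    using binomial_ring[of 1 "- a * r" m] by simp
  also have "\<dots> = (\<Sum>i<m. of_nat (m choose i) * (- a * r) ^ (m - i)) + 1"
    by (simp add: lessThan_Suc_atMost[symmetric])
  also have "(\<Sum>i<m. of_nat (m choose i) * (- a * r) ^ (m - i))
               = r * (\<Sum>i<m. of_nat (m choose i) * (- a) ^ (m - i) * r ^ (m - 1 - i))"
    unfolding sum_distrib_left
  proof (rule sum.cong[OF refl])
    fix i assume "i \<in> {..<m}"
    then have "m - i = Suc (m - 1 - i)" by auto
    then have "r ^ (m - i) = r * r ^ (m - 1 - i)" by simp
    then show "of_nat (m choose i) * (- a * r) ^ (m - i)
                 = r * (of_nat (m choose i) * (- a) ^ (m - i) * r ^ (m - 1 - i))"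
      unfolding power_mult_distrib by (simp only: mult_ac)
  qed
  finally show ?thesis .
qed

lemma one_minus_mult_power_eq_of_root:
  fixes a r :: "'a::comm_ring_1"
  assumes "0 < m"
    and "(\<Sum>i = 0..<m. of_nat (m choose i) * (- a) ^ (m - i) * r ^ (m - 1 - i)) + 1 = 0"
  shows "(1 - a * r) ^ m = 1 - r"
proof -
  have "(\<Sum>i<m. of_nat (m choose i) * (- a) ^ (m - i) * r ^ (m - 1 - i)) = - 1"
    using assms(2) unfolding atLeast0LessThan by (simp add: eq_neg_iff_add_eq_0)
  then show ?thesis using one_minus_mult_power_expand[OF assms(1), of a r] by simp
qed

lemma card_subsets_with_card_inter:
  assumes "finite X" "A \<subseteq> X" "j \<le> i"
  shows "card {U. U \<subseteq> X \<and> card U = i \<and> card (U \<inter> A) = j}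
           = (card A choose j) * (card (X - A) choose (i - j))"
proof -
  have fA: "finite A" and fXA: "finite (X - A)"
    using assms(1,2) finite_subset by auto
  let ?L = "{Y. Y \<subseteq> A \<and> card Y = j} \<times> {Z. Z \<subseteq> X - A \<and> card Z = i - j}"
  let ?R = "{U. U \<subseteq> X \<and> card U = i \<and> card (U \<inter> A) = j}"
  have "bij_betw (\<lambda>(Y, Z). Y \<union> Z) ?L ?R"
  proof (rule bij_betw_byWitness[where f'="\<lambda>U. (U \<inter> A, U - A)"])
    show "(\<lambda>(Y, Z). Y \<union> Z) ` ?L \<subseteq> ?R"
    proof
      fix x assume "x \<in> (\<lambda>(Y, Z). Y \<union> Z) ` ?L"
      then obtain Y Z where x: "x = Y \<union> Z"
        and YZ: "Y \<subseteq> A" "Z \<subseteq> X - A" "j = card Y" "card Z = i - card Y"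
        by auto
      have "finite Y" "finite Z" using YZ fA fXA by (auto intro: finite_subset)
      then have "card (Y \<union> Z) = card Y + card Z"
        using YZ by (intro card_Un_disjoint) auto
      moreover have "(Y \<union> Z) \<inter> A = Y" using YZ by auto
      ultimately show "x \<in> ?R" using YZ assms unfolding x by auto
    qed
    show "(\<lambda>U. (U \<inter> A, U - A)) ` ?R \<subseteq> ?L"
    proof
      fix x assume "x \<in> (\<lambda>U. (U \<inter> A, U - A)) ` ?R"
      then obtain U where x: "x = (U \<inter> A, U - A)"
        and U: "U \<subseteq> X" "card U = i" "card (U \<inter> A) = j"
        by auto
      have "card U = card (U \<inter> A) + card (U - A)"
        using U(1) assms(1) by (metis card_Int_Diff finite_subset)
      then show "x \<in> ?L" using U unfolding x by auto
    qed
  qed auto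
  then have "card ?R = card ?L" by (simp add: bij_betw_same_card)
  then show ?thesis by (simp add: card_cartesian_product n_subsets fA fXA)
qed

lemma sum_card_Diff_by_card_inter:
  fixes h :: "nat \<Rightarrow> 'a::comm_semiring_1"
  assumes "finite X" "A \<subseteq> X"
  shows "(\<Sum>U | U \<subseteq> X \<and> card U = i. h (card (U - A)))
           = (\<Sum>j = 0..i. of_nat (card A choose j) * of_nat (card (X - A) choose (i - j)) * h (i - j))"
proof -
  let ?C = "{U. U \<subseteq> X \<and> card U = i}"
  let ?C\<^sub>j = "\<lambda>j. {U. U \<subseteq> X \<and> card U = i \<and> card (U \<inter> A) = j}"
  have fC: "finite ?C" by (rule finite_subset[of _ "Pow X"]) (use assms(1) in auto)
  have split: "card U = card (U \<inter> A) + card (U - A)" if "U \<subseteq> X" for U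
    using that assms(1) by (metis card_Int_Diff finite_subset)
  have "(\<Sum>U\<in>?C. h (card (U - A))) = (\<Sum>j = 0..i. \<Sum>U\<in>{U \<in> ?C. card (U \<inter> A) = j}. h (card (U - A)))"
  proof (rule sum.group[symmetric, OF fC])
    show "(\<lambda>U. card (U \<inter> A)) ` ?C \<subseteq> {0..i}" using split by force
  qed simp
  also have "\<dots> = (\<Sum>j = 0..i. of_nat (card (?C\<^sub>j j)) * h (i - j))"
  proof (rule sum.cong[OF refl])
    fix j
    have "{U \<in> ?C. card (U \<inter> A) = j} = ?C\<^sub>j j" by auto
    moreover have "h (card (U - A)) = h (i - j)" if "U \<in> ?C\<^sub>j j" for U
      using that split[of U] by simp
    ultimately show "(\<Sum>U\<in>{U \<in> ?C. card (U \<inter> A) = j}. h (card (U - A))) = of_nat (card (?C\<^sub>j j)) * h (i - j)"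
      by simp
  qed
  also have "\<dots> = (\<Sum>j = 0..i. of_nat (card A choose j) * of_nat (card (X - A) choose (i - j)) * h (i - j))"
    by (intro sum.cong refl) (simp add: card_subsets_with_card_inter assms)
  finally show ?thesis by simp
qed

subsection \<open>Offsets of the segments\<close>

definition rank_in :: "'a::linorder set \<Rightarrow> 'a \<Rightarrow> nat" where
  "rank_in A u = card {v \<in> A. v < u}"

lemma rank_in_less_card:
  assumes "finite A" "u \<in> A"
  shows "rank_in A u < card A"
  unfolding rank_in_def by (rule psubset_card_mono) (use assms in auto)

lemma rank_in_strict_mono:
  assumes "finite A" "u \<in> A" "u < u'"
  shows "rank_in A u < rank_in A u'"
  unfolding rank_in_def by (rule psubset_card_mono) (use assms in auto)

lemma bij_betw_rank_in:
  assumes "finite A"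
  shows "bij_betw (rank_in A) A {..<card A}"
proof -
  have inj: "inj_on (rank_in A) A"
  proof (rule inj_onI)
    fix x y assume xy: "x \<in> A" "y \<in> A" "rank_in A x = rank_in A y"
    show "x = y"
    proof (rule linorder_cases[of x y])
      assume "x < y"
      then have "rank_in A x < rank_in A y" by (rule rank_in_strict_mono[OF assms xy(1)])
      with xy(3) show ?thesis by simp
    next
      assume "y < x"
      then have "rank_in A y < rank_in A x" by (rule rank_in_strict_mono[OF assms xy(2)])
      with xy(3) show ?thesis by simp
    qed
  qed
  have "rank_in A ` A \<subseteq> {..<card A}" using rank_in_less_card[OF assms] by auto
  moreover have "card (rank_in A ` A) = card {..<card A}" using card_image[OF inj] by simp
  ultimately have "rank_in A ` A = {..<card A}" by (intro card_subset_eq) simp_all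
  with inj show ?thesis unfolding bij_betw_def ..
qed

text \<open>The segments sent by the non-selfish users other than u* are numbered in increasing
order of the users; the same numbering is used for the XOR sent by u*.\<close>

definition seg_offset :: "nat set \<Rightarrow> (nat set \<Rightarrow> nat) \<Rightarrow> nat set \<Rightarrow> nat \<Rightarrow> nat" where
  "seg_offset Sf ustar U = rank_in (U - Sf - {ustar (U - Sf)})"

lemma valid_offsets_seg_offset:
  assumes "\<forall>T. T \<noteq> {} \<longrightarrow> ustar T \<in> T"
  shows "valid_offsets K Sf ustar (seg_offset Sf ustar) (seg_offset Sf ustar)"
  unfolding valid_offsets_def
proof (intro allI impI)
  fix U assume U: "U \<subseteq> {..<K} \<and> 2 \<le> card U \<and> 2 \<le> card (U - Sf)"
  define A where "A = U - Sf - {ustar (U - Sf)}"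
  have fA: "finite A" using U finite_subset unfolding A_def by blast
  have "U - Sf \<noteq> {}"
  proof
    assume "U - Sf = {}"
    with U show False by simp
  qed
  then have "ustar (U - Sf) \<in> U - Sf" by (rule mp[OF spec[OF assms]])
  then have "card A = card (U - Sf) - 1"
    using fA unfolding A_def by (simp add: card_Diff_singleton)
  moreover have "inj_on (rank_in A) A" "\<forall>u\<in>A. rank_in A u < card A"
    using bij_betw_rank_in[OF fA] rank_in_less_card[OF fA] by (auto simp: bij_betw_def)
  moreover have "seg_offset Sf ustar U = rank_in A" unfolding seg_offset_def A_def ..
  ultimately show "inj_on (seg_offset Sf ustar U) (U - Sf - {ustar (U - Sf)})
      \<and> (\<forall>u\<in>U - Sf - {ustar (U - Sf)}. seg_offset Sf ustar U u < card (U - Sf) - 1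
                                       \<and> seg_offset Sf ustar U u < card (U - Sf) - 1)"
    unfolding A_def by simp
qed

definition xor_segments ::
    "(nat \<Rightarrow> nat) \<Rightarrow> nat set \<Rightarrow> nat \<Rightarrow> (nat \<Rightarrow> nat) \<Rightarrow> nat set \<Rightarrow> piece set" where
  "xor_segments \<omega> U n g V = {(\<omega> v, U - {v}, n, g v) | v. v \<in> V}"

lemma msg_one_nonselfish:
  "card (U - Sf) = 1
     \<Longrightarrow> msg Sf \<omega> ustar off cof U u = xor_segments \<omega> U 1 (\<lambda>_. 0) (U - {u})"
  unfolding msg_def xor_segments_def Let_def by auto

lemma msg_designated_sender:
  "card (U - Sf) \<noteq> 1 \<Longrightarrow> u = ustar (U - Sf)
     \<Longrightarrow> msg Sf \<omega> ustar off cof U u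
           = xor_segments \<omega> U (card (U - Sf) - 1) (cof U) (U - Sf - {u})"
  unfolding msg_def xor_segments_def Let_def by auto

lemma msg_other_sender:
  "card (U - Sf) \<noteq> 1 \<Longrightarrow> u \<noteq> ustar (U - Sf)
     \<Longrightarrow> msg Sf \<omega> ustar off cof U u
           = xor_segments \<omega> U (card (U - Sf) - 1) (\<lambda>_. off U u) (U - {u})"
  unfolding msg_def xor_segments_def Let_def by auto

text \<open>Every other component of such an XOR is a segment of a block Gamma_{f, U - {v}} with
v \<noteq> w, which w caches.\<close>

lemma knows_xor_segment:
  assumes "xor_segments \<omega> U n g V \<in> Msgs" "w \<in> V" "w \<in> U"
    and "\<forall>v \<in> V - {w}. g v < n"
  shows "knows Msgs w (\<omega> w, U - {w}, n, g w)"
proof (rule knows.decode[OF assms(1)])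
  show "(\<omega> w, U - {w}, n, g w) \<in> xor_segments \<omega> U n g V"
    using assms(2) unfolding xor_segments_def by blast
  show "\<forall>p \<in> xor_segments \<omega> U n g V - {(\<omega> w, U - {w}, n, g w)}. knows Msgs w p"
    using assms(3,4) unfolding xor_segments_def by (auto intro: knows.cached)
qed

lemma mlen_xor_segments:
  assumes "finite V" "V \<noteq> {}" "V \<subseteq> U"
  shows "mlen K q r I (xor_segments \<omega> U n g V)
           = q ^ (card U - 1) * (1 - q) ^ (K - (card U - 1)) * real I / r / real n"
proof -
  define c where "c = q ^ (card U - 1) * (1 - q) ^ (K - (card U - 1)) * real I / r / real n"
  obtain v where "v \<in> V" using assms(2) by blast
  then have "(\<omega> v, U - {v}, n, g v) \<in> xor_segments \<omega> U n g V"
    unfolding xor_segments_def by blast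
  moreover have "plen K q r I p = c" if "p \<in> xor_segments \<omega> U n g V" for p
    using that assms(3) unfolding xor_segments_def plen_def blen_def c_def
    by (auto simp: card_Diff_singleton_if)
  ultimately have "plen K q r I ` xor_segments \<omega> U n g V = {c}"
    by (metis image_constant image_cong)
  then show ?thesis unfolding mlen_def c_def by simp
qed

lemma mlen_msg:
  assumes "finite U" "2 \<le> card U" "u \<in> U - Sf"
  shows "mlen K q r I (msg Sf \<omega> ustar off cof U u)
           = q ^ (card U - 1) * (1 - q) ^ (K - (card U - 1)) * real I / r
               / real (if card (U - Sf) = 1 then 1 else card (U - Sf) - 1)"
proof -
  have nonempty: "U - {u} \<noteq> {}"
  proof
    assume "U - {u} = {}"
    then have "card U \<le> card {u}" using assms(1) by (intro card_mono) auto
    with assms(2) show False by simp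
  qed
  have nonempty_nonselfish: "U - Sf - {u} \<noteq> {}" if "card (U - Sf) \<noteq> 1"
  proof
    assume "U - Sf - {u} = {}"
    then have "U - Sf = {u}" using assms(3) by blast
    with that show False by simp
  qed
  have "finite (U - {u})" "finite (U - Sf - {u})" using assms(1) by simp_all
  consider "card (U - Sf) = 1"
    | "card (U - Sf) \<noteq> 1" "u = ustar (U - Sf)"
    | "card (U - Sf) \<noteq> 1" "u \<noteq> ustar (U - Sf)"
    by blast
  then show ?thesis
  proof cases
    case 1
    then show ?thesis
      unfolding msg_one_nonselfish[OF 1]
      using nonempty \<open>finite (U - {u})\<close> by (subst mlen_xor_segments) auto
  next
    case 2
    then show ?thesis
      unfolding msg_designated_sender[where ustar = ustar, OF 2]
      using nonempty_nonselfish \<open>finite (U - Sf - {u})\<close> by (subst mlen_xor_segments) auto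
  next
    case 3
    then show ?thesis
      unfolding msg_other_sender[where ustar = ustar, OF 3]
      using nonempty \<open>finite (U - {u})\<close> by (subst mlen_xor_segments) auto
  qed
qed

subsection \<open>Decoding\<close>

definition delivered :: "nat \<Rightarrow> nat set \<Rightarrow> (nat \<Rightarrow> nat) \<Rightarrow> (nat set \<Rightarrow> nat) \<Rightarrow> piece set set" where
  "delivered K Sf \<omega> ustar =
     (\<lambda>(U, u). msg Sf \<omega> ustar (seg_offset Sf ustar) (seg_offset Sf ustar) U u) ` tx_index K Sf"

lemma msg_in_delivered:
  assumes "U \<subseteq> {..<K}" "2 \<le> card U" "u \<in> U - Sf"
  shows "msg Sf \<omega> ustar (seg_offset Sf ustar) (seg_offset Sf ustar) U u \<in> delivered K Sf \<omega> ustar"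
  using assms unfolding delivered_def tx_index_def by force

lemma recovered_one_nonselfish:
  assumes "U \<subseteq> {..<K}" "w \<in> U" "U - Sf = {x}" "x \<noteq> w"
  shows "recovered (delivered K Sf \<omega> ustar) w (\<omega> w) (U - {w})"
proof -
  have "card {w, x} \<le> card U"
    using assms finite_subset by (intro card_mono) auto
  then have "2 \<le> card U" using assms(4) by simp
  moreover have "x \<in> U - Sf" using assms(3) by blast
  ultimately have "msg Sf \<omega> ustar (seg_offset Sf ustar) (seg_offset Sf ustar) U x
                     \<in> delivered K Sf \<omega> ustar"
    by (rule msg_in_delivered[OF assms(1)])
  then have "xor_segments \<omega> U 1 (\<lambda>_. 0) (U - {x}) \<in> delivered K Sf \<omega> ustar"
    using assms(3) by (simp add: msg_one_nonselfish)
  then have "knows (delivered K Sf \<omega> ustar) w (\<omega> w, U - {w}, 1, 0)"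
    using assms(2,4) by (auto dest: knows_xor_segment)
  then show ?thesis unfolding recovered_def by (intro exI[of _ 1]) auto
qed

lemma recovered_several_nonselfish:
  assumes ustar: "\<forall>T. T \<noteq> {} \<longrightarrow> ustar T \<in> T"
    and U: "U \<subseteq> {..<K}" "w \<in> U" "2 \<le> card (U - Sf)"
  shows "recovered (delivered K Sf \<omega> ustar) w (\<omega> w) (U - {w})"
proof -
  define A where "A = U - Sf - {ustar (U - Sf)}"
  define n where "n = card (U - Sf) - 1"
  have fU: "finite U" using U(1) finite_subset by blast
  then have fA: "finite A" unfolding A_def by simp
  have cU: "2 \<le> card U" using U(3) card_mono[OF fU, of "U - Sf"] by auto
  have n1: "card (U - Sf) \<noteq> 1" using U(3) by simp
  have "U - Sf \<noteq> {}" using U(3) by (metis card.empty not_numeral_le_zero)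
  then have u0: "ustar (U - Sf) \<in> U - Sf" by (rule mp[OF spec[OF ustar]])
  then have cA: "card A = n" using fU unfolding A_def n_def by (simp add: card_Diff_singleton)
  have "knows (delivered K Sf \<omega> ustar) w (\<omega> w, U - {w}, n, k)" if "k < n" for k
  proof -
    have "k \<in> rank_in A ` A" using bij_betw_rank_in[OF fA] that cA by (simp add: bij_betw_def)
    then obtain u where u: "u \<in> A" "rank_in A u = k" by blast
    show ?thesis
    proof (cases "u = w")
      case True
      have "msg Sf \<omega> ustar (seg_offset Sf ustar) (seg_offset Sf ustar) U (ustar (U - Sf))
              \<in> delivered K Sf \<omega> ustar"
        using msg_in_delivered[OF U(1) cU] u0 by blast
      then have "xor_segments \<omega> U n (rank_in A) A \<in> delivered K Sf \<omega> ustar"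
        using n1 by (simp add: msg_designated_sender n_def A_def seg_offset_def)
      then show ?thesis
        using knows_xor_segment[of \<omega> U n "rank_in A" A _ w] rank_in_less_card[OF fA] cA
          True u U(2) by auto
    next
      case False
      have "u \<noteq> ustar (U - Sf)" "u \<in> U - Sf" using u unfolding A_def by auto
      moreover from this(2) have
        "msg Sf \<omega> ustar (seg_offset Sf ustar) (seg_offset Sf ustar) U u \<in> delivered K Sf \<omega> ustar"
        by (rule msg_in_delivered[OF U(1) cU])
      ultimately have "xor_segments \<omega> U n (\<lambda>_. k) (U - {u}) \<in> delivered K Sf \<omega> ustar"
        using n1 u by (simp add: msg_other_sender n_def A_def seg_offset_def)
      then show ?thesis
        using knows_xor_segment[of \<omega> U n "\<lambda>_. k" "U - {u}" _ w] False U(2) that by auto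
    qed
  qed
  moreover have "0 < n" using U(3) unfolding n_def by simp
  ultimately show ?thesis unfolding recovered_def by blast
qed

lemma recovered_delivered:
  assumes ustar: "\<forall>T. T \<noteq> {} \<longrightarrow> ustar T \<in> T"
    and "w < K" "P \<subseteq> {..<K}" "\<not> P \<subseteq> Sf"
  shows "recovered (delivered K Sf \<omega> ustar) w (\<omega> w) P"
proof (cases "w \<in> P")
  case True
  then show ?thesis unfolding recovered_def by (intro exI[of _ 1]) (auto intro: knows.cached)
next
  case False
  define U where "U = insert w P"
  have P: "P = U - {w}" using False unfolding U_def by auto
  have U: "U \<subseteq> {..<K}" "w \<in> U" using assms(2,3) unfolding U_def by auto
  obtain x where x: "x \<in> P" "x \<notin> Sf" using assms(4) by auto
  then have "x \<in> U - Sf" "x \<noteq> w" using False unfolding U_def by auto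
  have "finite (U - Sf)" using U(1) finite_subset by blast
  then have "card (U - Sf) \<noteq> 0" using \<open>x \<in> U - Sf\<close> by auto
  then consider "card (U - Sf) = 1" | "2 \<le> card (U - Sf)" by linarith
  then show ?thesis
  proof cases
    case 1
    then have "U - Sf = {x}" using \<open>x \<in> U - Sf\<close> by (metis card_1_singletonE singletonD)
    then show ?thesis unfolding P by (rule recovered_one_nonselfish[OF U _ \<open>x \<noteq> w\<close>])
  next
    case 2
    then show ?thesis unfolding P by (rule recovered_several_nonselfish[OF ustar U])
  qed
qed

lemma sum_blen_not_subset:
  assumes "Sf \<subseteq> {..<K}"
  shows "(\<Sum>P | P \<subseteq> {..<K} \<and> \<not> P \<subseteq> Sf. blen K q r I P)
           = (1 - (1 - q) ^ (K - card Sf)) * real I / r"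
proof -
  let ?g = "\<lambda>P. q ^ card P * (1 - q) ^ (K - card P)"
  let ?N = "{P. P \<subseteq> {..<K} \<and> \<not> P \<subseteq> Sf}"
  have fS: "finite Sf" using assms finite_subset by blast
  have SK: "card Sf \<le> K" using card_mono[OF _ assms] by simp
  have all: "(\<Sum>P\<in>Pow {..<K}. ?g P) = 1"
    using sum_Pow_binomial[of "{..<K}" q "1 - q"] by simp
  have "(\<Sum>P\<in>Pow Sf. ?g P)
          = (\<Sum>P\<in>Pow Sf. (1 - q) ^ (K - card Sf) * (q ^ card P * (1 - q) ^ (card Sf - card P)))"
  proof (rule sum.cong[OF refl])
    fix P assume "P \<in> Pow Sf"
    then have "card P \<le> card Sf" using fS by (intro card_mono) auto
    then have "K - card P = (K - card Sf) + (card Sf - card P)" using SK by simp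
    then show "?g P = (1 - q) ^ (K - card Sf) * (q ^ card P * (1 - q) ^ (card Sf - card P))"
      by (simp add: power_add)
  qed
  also have "\<dots> = (1 - q) ^ (K - card Sf)"
    using sum_Pow_binomial[OF fS, of q "1 - q"] by (simp flip: sum_distrib_left)
  finally have selfish: "(\<Sum>P\<in>Pow Sf. ?g P) = (1 - q) ^ (K - card Sf)" .
  have split: "Pow {..<K} = Pow Sf \<union> ?N" using assms by blast
  have fN: "finite ?N" by (rule finite_subset[of _ "Pow {..<K}"]) auto
  have "(\<Sum>P\<in>Pow {..<K}. ?g P) = (\<Sum>P\<in>Pow Sf. ?g P) + (\<Sum>P\<in>?N. ?g P)"
    unfolding split by (rule sum.union_disjoint) (use fS fN in auto)
  then have "(\<Sum>P\<in>?N. ?g P) = 1 - (1 - q) ^ (K - card Sf)"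
    using all selfish by linarith
  moreover have "(\<Sum>P\<in>?N. blen K q r I P) = (\<Sum>P\<in>?N. ?g P) * real I / r"
    unfolding blen_def sum_distrib_right sum_divide_distrib by simp
  ultimately show ?thesis by simp
qed

lemma decodes_delivered:
  assumes ustar: "\<forall>T. T \<noteq> {} \<longrightarrow> ustar T \<in> T"
    and "Sf \<subseteq> {..<K}" "w < K"
    and "0 < r" "0 \<le> q" "q \<le> 1" "(1 - q) ^ (K - card Sf) = 1 - r"
  shows "decodes K q r I (delivered K Sf \<omega> ustar) w (\<omega> w)"
proof -
  let ?R = "{P. P \<subseteq> {..<K} \<and> recovered (delivered K Sf \<omega> ustar) w (\<omega> w) P}"
  have "real I = (\<Sum>P | P \<subseteq> {..<K} \<and> \<not> P \<subseteq> Sf. blen K q r I P)"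
    using sum_blen_not_subset[OF assms(2)] assms(4,7) by simp
  also have "\<dots> \<le> (\<Sum>P\<in>?R. blen K q r I P)"
  proof (rule sum_mono2)
    show "finite ?R" by (rule finite_subset[of _ "Pow {..<K}"]) auto
    show "{P. P \<subseteq> {..<K} \<and> \<not> P \<subseteq> Sf} \<subseteq> ?R"
      using recovered_delivered[OF ustar assms(3)] by blast
    show "0 \<le> blen K q r I P" for P
      unfolding blen_def using assms(4-6) by simp
  qed
  finally show ?thesis unfolding decodes_def .
qed

subsection \<open>The rate\<close>

text \<open>Transmitted amount, in blocks, for a subset with t non-selfish users: t segments of
size 1/(t - 1) of a block, or a single whole block if t = 1.\<close>

definition subset_load :: "nat \<Rightarrow> real" where
  "subset_load t = (if t = 0 then 0 else if t = 1 then 1 else real t / real (t - 1))"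

lemma sum_mlen_senders:
  assumes "finite U" "2 \<le> card U"
  shows "(\<Sum>u\<in>U - Sf. mlen K q r I (msg Sf \<omega> ustar off cof U u))
           = subset_load (card (U - Sf))
               * (q ^ (card U - 1) * (1 - q) ^ (K - (card U - 1)) * real I / r)"
proof -
  define L where "L = q ^ (card U - 1) * (1 - q) ^ (K - (card U - 1)) * real I / r"
  define t where "t = card (U - Sf)"
  have "(\<Sum>u\<in>U - Sf. mlen K q r I (msg Sf \<omega> ustar off cof U u))
          = (\<Sum>u\<in>U - Sf. L / real (if t = 1 then 1 else t - 1))"
    using mlen_msg[OF assms] unfolding L_def t_def by simp
  also have "\<dots> = subset_load t * L"
    unfolding t_def subset_load_def by auto
  finally show ?thesis unfolding L_def t_def .
qed

lemma Rsf_eq_sum_subset_load: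
  assumes "2 \<le> i"
  shows "Rsf K S i = (\<Sum>j = 0..i. real (S choose j) * real ((K - S) choose (i - j)) * subset_load (i - j))"
proof -
  obtain k where i: "i = Suc (Suc k)" using assms by (metis add_2_eq_Suc le_Suc_ex)
  have "(\<Sum>j = 0..k. real (S choose j) * real ((K - S) choose (i - j)) * subset_load (i - j))
          = (\<Sum>j = 0..k. real (S choose j) * real ((K - S) choose (i - j)) * real (i - j) / real (i - j - 1))"
    by (rule sum.cong) (auto simp: subset_load_def i)
  then show ?thesis
    unfolding Rsf_def by (simp add: i sum.atLeast0_atMost_Suc subset_load_def)
qed

lemma sum_subset_load:
  assumes "Sf \<subseteq> {..<K}" "card Sf = S" "2 \<le> i"
  shows "(\<Sum>U | U \<subseteq> {..<K} \<and> card U = i. subset_load (card (U - Sf))) = Rsf K S i"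
proof -
  have "card ({..<K} - Sf) = K - S"
    using assms(1,2) by (simp add: card_Diff_subset finite_subset)
  then show ?thesis
    using sum_card_Diff_by_card_inter[where h = subset_load and i = i, OF _ assms(1)] assms(2)
    by (simp add: Rsf_eq_sum_subset_load[OF assms(3)])
qed

lemma scheme_rate_eq:
  assumes "Sf \<subseteq> {..<K}" "card Sf = S" "0 < I"
  shows "scheme_rate K q r I Sf \<omega> ustar off cof
           = (1 / r) * (\<Sum>i = 2..K. Rsf K S i * q ^ (i - 1) * (1 - q) ^ (K - i + 1))"
proof -
  define UU where "UU = {U. U \<subseteq> {..<K} \<and> 2 \<le> card U}"
  define L where "L i = q ^ (i - 1) * (1 - q) ^ (K - (i - 1)) * real I / r" for i
  have fUU: "finite UU" unfolding UU_def by (rule finite_subset[of _ "Pow {..<K}"]) auto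
  have fin: "finite U" if "U \<in> UU" for U
    using that finite_subset unfolding UU_def by blast
  have "tx_index K Sf = Sigma UU (\<lambda>U. U - Sf)" unfolding tx_index_def UU_def by auto
  then have "(\<Sum>(U, u) \<in> tx_index K Sf. mlen K q r I (msg Sf \<omega> ustar off cof U u))
               = (\<Sum>U\<in>UU. \<Sum>u\<in>U - Sf. mlen K q r I (msg Sf \<omega> ustar off cof U u))"
    using fUU fin by (simp add: sum.Sigma)
  also have "\<dots> = (\<Sum>U\<in>UU. subset_load (card (U - Sf)) * L (card U))"
    using fin unfolding UU_def L_def by (intro sum.cong refl sum_mlen_senders) auto
  also have "\<dots> = (\<Sum>i = 2..K. \<Sum>U | U \<in> UU \<and> card U = i. subset_load (card (U - Sf)) * L (card U))"
  proof (rule sum.group[symmetric, OF fUU])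
    show "card ` UU \<subseteq> {2..K}"
      unfolding UU_def using card_mono[of "{..<K}"] by fastforce
  qed simp
  also have "\<dots> = (\<Sum>i = 2..K. L i * Rsf K S i)"
  proof (rule sum.cong[OF refl])
    fix i assume i: "i \<in> {2..K}"
    then have "{U. U \<in> UU \<and> card U = i} = {U. U \<subseteq> {..<K} \<and> card U = i}"
      unfolding UU_def by auto
    then show "(\<Sum>U | U \<in> UU \<and> card U = i. subset_load (card (U - Sf)) * L (card U)) = L i * Rsf K S i"
      using sum_subset_load[OF assms(1,2), of i] i by (simp flip: sum_distrib_right)
  qed
  finally have "scheme_rate K q r I Sf \<omega> ustar off cof = (\<Sum>i = 2..K. L i * Rsf K S i) / real I"
    unfolding scheme_rate_def by simp
  also have "\<dots> = (1 / r) * (\<Sum>i = 2..K. Rsf K S i * q ^ (i - 1) * (1 - q) ^ (K - i + 1))"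
    unfolding sum_divide_distrib sum_distrib_left
    using assms(3) by (intro sum.cong refl) (auto simp: L_def Suc_diff_le)
  finally show ?thesis .
qed

theorem theorem4:
  fixes K S N I :: nat and M r :: real and Sf :: "nat set"
    and \<omega> :: "nat \<Rightarrow> nat" and ustar :: "nat set \<Rightarrow> nat"
  assumes "Sf \<subseteq> {..<K}" and "card Sf = S"
    and "0 < N" and "0 \<le> M" and "M \<le> real N" and "0 < I"
    and "0 < r" and "r < 1"
    and "M * (real K - real S) / real N > 1"
    and "(\<Sum>i = 0..<K - S. real ((K - S) choose i) * (- M / real N) ^ (K - S - i)
            * r ^ (K - S - 1 - i)) + 1 = 0"
    and "\<forall>u < K. \<omega> u < N"
    and "\<forall>T. T \<noteq> {} \<longrightarrow> ustar T \<in> T"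
  shows "\<exists>off cof. valid_offsets K Sf ustar off cof \<and>
           (let q = M * r / real N;
                Msgs = (\<lambda>(U, u). msg Sf \<omega> ustar off cof U u) ` tx_index K Sf
            in (\<forall>u < K. decodes K q r I Msgs u (\<omega> u)) \<and>
               scheme_rate K q r I Sf \<omega> ustar off cof = Rach K S M N r)"
proof -
  let ?q = "M * r / real N"
  have "0 < K - S"
  proof (rule ccontr)
    assume "\<not> 0 < K - S"
    then have "M * (real K - real S) \<le> 0" using assms(4) by (simp add: mult_nonneg_nonpos)
    then show False using assms(3,9) by (simp add: divide_nonpos_pos not_less[symmetric])
  qed
  then have "(1 - M / real N * r) ^ (K - S) = 1 - r"
    using one_minus_mult_power_eq_of_root[of "K - S" "M / real N" r] assms(10)
    by (simp only: minus_divide_left)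
  then have "(1 - ?q) ^ (K - S) = 1 - r" by (simp add: mult.commute)
  moreover have "0 \<le> ?q" "?q \<le> 1"
    using assms(3-5,7,8) mult_left_le[of r M] by (simp_all add: divide_le_eq_1)
  ultimately have "\<forall>u<K. decodes K ?q r I (delivered K Sf \<omega> ustar) u (\<omega> u)"
    using decodes_delivered[OF assms(12,1)] assms(2,7) by blast
  moreover have "scheme_rate K ?q r I Sf \<omega> ustar off cof = Rach K S M N r" for off cof
    unfolding scheme_rate_eq[OF assms(1,2,6)] Rach_def ..
  ultimately show ?thesis
    using valid_offsets_seg_offset[OF assms(12)] unfolding delivered_def Let_def by blast
qed

end
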